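(* Let $a$ be a function of two variables, and let $f,\tilde f,g,\tilde g,h,\tilde h$ be functions of two variables. Let $q(n_1,n_2;x)$, $(n_1,n_2)\in\mathbb Z^2$, be a function such that for every $x$ it satisfies the 7-point equation $$f(q,q_{1,0})-\tilde f(q,q_{-1,0})+g(q,q_{0,1})-\tilde g(q,q_{0,-1})+h(q,q_{-1,-1})-\tilde h(q,q_{1,1})=0$$ at every site, and such that at every site $$q_{,x}=a\bigl(q,\,f(q,q_{1,0})-\tilde g(q,q_{0,-1})-\tilde h(q,q_{1,1})\bigr)$$ (by the 7-point equation, equivalently $q_{,x}=a\bigl(q,\,\tilde f(q,q_{-1,0})-g(q,q_{0,1})-h(q,q_{-1,-1})\bigr)$). Fix an integer $j$. (i) The functions $q(k)=q(j,k)$, $p(k)=q(j+1,k)$ of $k\in\mathbb Z$ satisfy $$q_{,x}=a\bigl(q,f(q,p)-\tilde g(q,q_{-1})-\tilde h(q,p_1)\bigr),\qquad p_{,x}=a\bigl(p,\tilde f(p,q)-g(p,p_1)-h(p,q_{-1})\bigr).$$ (ii) The functions $q(k)=q(-k,j-k)$, $p(k)=q(1-k,j-k)$ of $k\in\mathbb Z$ satisfy $$q_{,x}=a\bigl(q,f(q,p)-\tilde g(q,p_1)-\tilde h(q,q_{-1})\bigr),\qquad p_{,x}=a\bigl(p,\tilde f(p,q)-g(p,q_{-1})-h(p,p_1)\bigr).$$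
   Context: Notation: $q_{i,j}=q(n_1+i,n_2+j)$ for the two-dimensional lattice function, and for one-index sequences $q_m=q(k+m)$, $p_m=p(k+m)$, with $q=q(k)$, $p=p(k)$. Subscript ${,x}$ denotes the derivative with respect to $x$. *)

theory Defs
  imports Complex_Main
begin

end

theory Submission
  imports Defs
begin

text \<open>Both reductions merely relabel the lattice: each equation of (i) and (ii) is the
given flow at one site, either in its stated form or in the equivalent form obtained by solving
the 7-point equation for the right-hand side.\<close>

lemma seven_point_flow_alt:
  fixes a f ft g gt h ht :: "real \<Rightarrow> real \<Rightarrow> real"
    and q :: "int \<Rightarrow> int \<Rightarrow> real \<Rightarrow> real"
  assumes seven: "\<And>n1 n2 x.
      f (q n1 n2 x) (q (n1+1) n2 x) - ft (q n1 n2 x) (q (n1-1) n2 x)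
    + g (q n1 n2 x) (q n1 (n2+1) x) - gt (q n1 n2 x) (q n1 (n2-1) x)
    + h (q n1 n2 x) (q (n1-1) (n2-1) x) - ht (q n1 n2 x) (q (n1+1) (n2+1) x) = 0"
    and flow: "\<And>n1 n2 x. ((\<lambda>y. q n1 n2 y) has_real_derivative
      a (q n1 n2 x) (f (q n1 n2 x) (q (n1+1) n2 x) - gt (q n1 n2 x) (q n1 (n2-1) x)
                     - ht (q n1 n2 x) (q (n1+1) (n2+1) x))) (at x)"
  shows "((\<lambda>y. q n1 n2 y) has_real_derivative
      a (q n1 n2 x) (ft (q n1 n2 x) (q (n1-1) n2 x) - g (q n1 n2 x) (q n1 (n2+1) x)
                     - h (q n1 n2 x) (q (n1-1) (n2-1) x))) (at x)"
proof -
  have "f (q n1 n2 x) (q (n1+1) n2 x) - gt (q n1 n2 x) (q n1 (n2-1) x)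
          - ht (q n1 n2 x) (q (n1+1) (n2+1) x)
      = ft (q n1 n2 x) (q (n1-1) n2 x) - g (q n1 n2 x) (q n1 (n2+1) x)
          - h (q n1 n2 x) (q (n1-1) (n2-1) x)"
    using seven[of n1 n2 x] by linarith
  with flow[of n1 n2 x] show ?thesis
    by simp
qed

theorem mainTheorem1:
  fixes a f ft g gt h ht :: "real \<Rightarrow> real \<Rightarrow> real"
    and q :: "int \<Rightarrow> int \<Rightarrow> real \<Rightarrow> real"
    and j :: int
  assumes seven: "\<And>n1 n2 x.
      f (q n1 n2 x) (q (n1+1) n2 x) - ft (q n1 n2 x) (q (n1-1) n2 x)
    + g (q n1 n2 x) (q n1 (n2+1) x) - gt (q n1 n2 x) (q n1 (n2-1) x)
    + h (q n1 n2 x) (q (n1-1) (n2-1) x) - ht (q n1 n2 x) (q (n1+1) (n2+1) x) = 0"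
    and flow: "\<And>n1 n2 x. ((\<lambda>y. q n1 n2 y) has_real_derivative
      a (q n1 n2 x) (f (q n1 n2 x) (q (n1+1) n2 x) - gt (q n1 n2 x) (q n1 (n2-1) x)
                     - ht (q n1 n2 x) (q (n1+1) (n2+1) x))) (at x)"
  shows "(\<forall>k x.
            ((\<lambda>y. q j k y) has_real_derivative
               a (q j k x) (f (q j k x) (q (j+1) k x) - gt (q j k x) (q j (k-1) x)
                            - ht (q j k x) (q (j+1) (k+1) x))) (at x)
          \<and> ((\<lambda>y. q (j+1) k y) has_real_derivative
               a (q (j+1) k x) (ft (q (j+1) k x) (q j k x) - g (q (j+1) k x) (q (j+1) (k+1) x)
                                - h (q (j+1) k x) (q j (k-1) x))) (at x))
       \<and> (\<forall>k x.
            ((\<lambda>y. q (-k) (j-k) y) has_real_derivative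
               a (q (-k) (j-k) x) (f (q (-k) (j-k) x) (q (1-k) (j-k) x)
                                   - gt (q (-k) (j-k) x) (q (1-(k+1)) (j-(k+1)) x)
                                   - ht (q (-k) (j-k) x) (q (-(k-1)) (j-(k-1)) x))) (at x)
          \<and> ((\<lambda>y. q (1-k) (j-k) y) has_real_derivative
               a (q (1-k) (j-k) x) (ft (q (1-k) (j-k) x) (q (-k) (j-k) x)
                                    - g (q (1-k) (j-k) x) (q (-(k-1)) (j-(k-1)) x)
                                    - h (q (1-k) (j-k) x) (q (1-(k+1)) (j-(k+1)) x))) (at x))"
proof -
  note alt = seven_point_flow_alt[of f q ft g gt h ht a, OF seven flow]
  have shifts: "1-(k+1) = -k" "j-(k+1) = j-k-1" "-(k-1) = -k+1" "j-(k-1) = j-k+1" "1-k = -k+1"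
    for k :: int
    by simp_all
  show ?thesis
    apply (intro conjI allI)
    subgoal for k x by (rule flow)
    subgoal for k x using alt[of "j+1" k x] by simp
    subgoal for k x using flow[of "-k" "j-k" x] unfolding shifts by (simp add: algebra_simps)
    subgoal for k x using alt[of "1-k" "j-k" x] unfolding shifts by (simp add: algebra_simps)
    done
qed

end
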